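(* Let $\Gamma$ be a symmetric, folded, idempotent family of Boolean promise relations such that $\operatorname{Maj}_L\notin\operatorname{poly}(\Gamma)$ for some odd positive integer $L$. Then there is a promise relation $(P,Q)$ with $\operatorname{poly}(\Gamma)\subseteq\operatorname{poly}(P,Q)$ of one of the following two forms: either $P=\operatorname{Ham}_k(\{(k+1)/2\})$, $Q=\operatorname{Ham}_k(\{0,1,\dots,k-1\})$ for some odd $k\ge 3$; or $P=\operatorname{Ham}_k(\{1,k\})$, $Q=\operatorname{Ham}_k(\{0,1,\dots,k\}\setminus\{b\})$ for some $k\ge 3$ and $b\in\{2,\dots,k-1\}$.
   Context: Domain $\{0,1\}$. A promise relation is a pair $(P,Q)$ with $P\subseteq Q\subseteq\{0,1\}^k$. $f:\{0,1\}^L\to\{0,1\}$ is a weak polymorphism of $(P,Q)$ if for all $x^{(1)},\dots,x^{(L)}\in P$, $(f(x^{(1)}_1,\dots,x^{(L)}_1),\dots,f(x^{(1)}_k,\dots,x^{(L)}_k))\in Q$; $\operatorname{poly}(\Gamma)$ is the set of functions that are weak polymorphisms of every member of $\Gamma$. $\Gamma$ is symmetric if every relation appearing in it is invariant under coordinate permutations; folded if each $f\in\operatorname{poly}(\Gamma)$ satisfies $f(\bar x)=\neg f(x)$; idempotent if each $f\in\operatorname{poly}(\Gamma)$ satisfies $f(0,\dots,0)=0$, $f(1,\dots,1)=1$. $\operatorname{Ham}_k(S)=\{x\in\{0,1\}^k:|x|\in S\}$ where $|x|$ is the Hamming weight. For odd $L$, $\operatorname{Maj}_L(x)=1$ iff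 $\sum_i x_i>L/2$. *)

theory Defs
  imports "HOL-Combinatorics.Permutations"
begin

text \<open>Boolean tuples are lists of bool (False = 0, True = 1).
 A function f : {0,1}^L -> {0,1} is a function on bool lists, only evaluated on lists of length L.\<close>

type_synonym promise_rel = "nat \<times> bool list set \<times> bool list set"

definition wf_promise_rel :: "promise_rel \<Rightarrow> bool" where
  "wf_promise_rel R = (case R of (k, P, Q) \<Rightarrow> P \<subseteq> Q \<and> Q \<subseteq> {x. length x = k})"

definition weak_poly :: "promise_rel \<Rightarrow> nat \<Rightarrow> (bool list \<Rightarrow> bool) \<Rightarrow> bool" where
  "weak_poly R L f = (case R of (k, P, Q) \<Rightarrow>
     (\<forall>x :: nat \<Rightarrow> bool list. (\<forall>i<L. x i \<in> P) \<longrightarrow>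
        map (\<lambda>j. f (map (\<lambda>i. x i ! j) [0..<L])) [0..<k] \<in> Q))"

definition in_poly :: "promise_rel set \<Rightarrow> nat \<Rightarrow> (bool list \<Rightarrow> bool) \<Rightarrow> bool" where
  "in_poly \<Gamma> L f = (1 \<le> L \<and> (\<forall>R\<in>\<Gamma>. weak_poly R L f))"

definition perm_invariant :: "nat \<Rightarrow> bool list set \<Rightarrow> bool" where
  "perm_invariant k S = (\<forall>\<sigma> x. \<sigma> permutes {..<k} \<longrightarrow> x \<in> S \<longrightarrow>
      map (\<lambda>j. x ! \<sigma> j) [0..<k] \<in> S)"

definition symmetric_fam :: "promise_rel set \<Rightarrow> bool" where
  "symmetric_fam \<Gamma> = (\<forall>(k, P, Q)\<in>\<Gamma>. perm_invariant k P \<and> perm_invariant k Q)"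

definition folded_fam :: "promise_rel set \<Rightarrow> bool" where
  "folded_fam \<Gamma> = (\<forall>L f. in_poly \<Gamma> L f \<longrightarrow>
      (\<forall>x. length x = L \<longrightarrow> f (map Not x) = (\<not> f x)))"

definition idempotent_fam :: "promise_rel set \<Rightarrow> bool" where
  "idempotent_fam \<Gamma> = (\<forall>L f. in_poly \<Gamma> L f \<longrightarrow>
      f (replicate L False) = False \<and> f (replicate L True) = True)"

definition hweight :: "bool list \<Rightarrow> nat" where
  "hweight x = length (filter id x)"

definition Ham :: "nat \<Rightarrow> nat set \<Rightarrow> bool list set" where
  "Ham k S = {x. length x = k \<and> hweight x \<in> S}"

definition Maj :: "nat \<Rightarrow> bool list \<Rightarrow> bool" where
  "Maj L x = (2 * hweight x > L)"

end

theory Submission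
  imports Defs
begin

text \<open>
  Since Maj_L fails on some symmetric relation (k, P, Q) of \<Gamma>, there are rows x_1, ..., x_L in P
  whose columnwise majority has a weight w that no tuple of Q has. By symmetry P and Q are
  determined by weight sets A \<subseteq> B, with all row weights in A and w \<notin> B.
  Double counting the ones of the L \<times> k matrix shows that the rows cannot all have weight
  at most w/2 (that forces w = 0), nor, dually, all at least (k + w)/2; and if some rows are
  lighter and some heavier than w, they cannot all be constant (that forces w \<in> {0, k}).
  Hence some row weight a satisfies a < w < 2a, or there are row weights a < w < c with
  a \<ge> 1, or the mirror image of one of these under complementation.

  Polymorphisms of \<Gamma> are idempotent and folded, so they also preserve every relation
  obtained from (k, P, Q) by fixing coordinates to constants or by complementing all tuples.
  Fixing 2a - 1 - w coordinates to 1 and k - w to 0 yields a relation containing the first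
  target; fixing a - 1 coordinates to 1 and k - c to 0 yields one containing the second.
\<close>

lemma hweight_eq_sum: "hweight xs = (\<Sum>j<length xs. of_bool (xs ! j))"
  by (induct xs) (simp_all add: hweight_def sum.lessThan_Suc_shift del: sum.lessThan_Suc)

lemma hweight_le_length: "hweight xs \<le> length xs"
  unfolding hweight_def by simp

lemma hweight_append [simp]: "hweight (xs @ ys) = hweight xs + hweight ys"
  unfolding hweight_def by simp

lemma hweight_replicate_True [simp]: "hweight (replicate n True) = n"
  unfolding hweight_def by simp

lemma hweight_replicate_False [simp]: "hweight (replicate n False) = 0"
  unfolding hweight_def by simp

lemma hweight_map_Not: "hweight (map Not xs) = length xs - hweight xs"
  unfolding hweight_def by (induct xs) (auto simp: Suc_diff_le)

lemma hweight_eq_0_iff: "hweight xs = 0 \<longleftrightarrow> xs = replicate (length xs) False"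
  unfolding hweight_def by (induct xs) auto

lemma hweight_eq_length_iff: "hweight xs = length xs \<longleftrightarrow> xs = replicate (length xs) True"
  unfolding hweight_def by (induct xs) (auto, metis length_filter_le Suc_n_not_le_n)

lemma Ham_mono: "(\<And>h. h \<le> k \<Longrightarrow> h \<in> S \<Longrightarrow> h \<in> T) \<Longrightarrow> Ham k S \<subseteq> Ham k T"
  unfolding Ham_def using hweight_le_length by fastforce

lemma append_padding_in_Ham_iff:
  "u @ replicate c1 True @ replicate c0 False \<in> Ham (n + c1 + c0) S \<longleftrightarrow>
   u \<in> Ham n {h. h + c1 \<in> S}"
  unfolding Ham_def by auto

lemma map_Not_in_Ham_iff: "map Not u \<in> Ham k S \<longleftrightarrow> u \<in> Ham k {h. k - h \<in> S}"
  unfolding Ham_def by (auto simp: hweight_map_Not)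

lemma mset_eq_if_hweight_eq:
  assumes "length y = length z" "hweight y = hweight z"
  shows "mset y = mset z"
proof -
  have "count (mset y) v = count (mset z) v" for v
    using assms sum_length_filter_compl[of id y] sum_length_filter_compl[of id z]
    by (cases v) (simp_all add: hweight_def count_mset count_list_eq_length_filter
        filter_cong[of _ _ "(=) True" id] filter_cong[of _ _ "(=) False" "\<lambda>x. \<not> id x"])
  then show ?thesis by (simp add: multiset_eq_iff)
qed

lemma perm_invariant_hweight_eq:
  assumes "perm_invariant k S" "z \<in> S" "length z = k" "length y = k" "hweight y = hweight z"
  shows "y \<in> S"
proof -
  obtain p where "p permutes {..<length z}" "permute_list p z = y"
    using mset_eq_if_hweight_eq assms(3-5) by (metis mset_eq_permutation)
  then show ?thesis
    using assms(1-3) unfolding perm_invariant_def permute_list_def by metis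
qed

lemma perm_invariant_eq_Ham:
  assumes "perm_invariant k S" "S \<subseteq> {x. length x = k}"
  shows "S = Ham k (hweight ` S)"
  using assms perm_invariant_hweight_eq[OF assms(1)] unfolding Ham_def by fastforce

definition coordwise :: "(bool list \<Rightarrow> bool) \<Rightarrow> nat \<Rightarrow> (nat \<Rightarrow> bool list) \<Rightarrow> nat \<Rightarrow> bool list" where
  "coordwise f N x k = map (\<lambda>j. f (map (\<lambda>i. x i ! j) [0..<N])) [0..<k]"

lemma length_coordwise [simp]: "length (coordwise f N x k) = k"
  unfolding coordwise_def by simp

lemma weak_poly_iff_coordwise:
  "weak_poly (k, P, Q) N f \<longleftrightarrow> (\<forall>x. (\<forall>i<N. x i \<in> P) \<longrightarrow> coordwise f N x k \<in> Q)"
  unfolding weak_poly_def coordwise_def by simp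

lemma coordwise_append:
  assumes "\<forall>i<N. length (x i) = n"
  shows "coordwise f N (\<lambda>i. x i @ z i) (n + m) = coordwise f N x n @ coordwise f N z m"
proof (rule nth_equalityI)
  fix j assume "j < length (coordwise f N (\<lambda>i. x i @ z i) (n + m))"
  then show "coordwise f N (\<lambda>i. x i @ z i) (n + m) ! j = (coordwise f N x n @ coordwise f N z m) ! j"
    using assms by (auto simp: coordwise_def nth_append intro!: arg_cong[where f = f] map_cong)
qed simp

lemma coordwise_replicate:
  "coordwise f N (\<lambda>i. replicate m b) m = replicate m (f (replicate N b))"
  unfolding coordwise_def by (intro nth_equalityI) (simp_all add: map_replicate_const)

lemma coordwise_map_Not:
  assumes "\<forall>c. length c = N \<longrightarrow> f (map Not c) = (\<not> f c)" "\<forall>i<N. length (x i) = k"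
  shows "coordwise f N (\<lambda>i. map Not (x i)) k = map Not (coordwise f N x k)"
proof -
  have "f (map (\<lambda>i. \<not> x i ! j) [0..<N]) = (\<not> f (map (\<lambda>i. x i ! j) [0..<N]))" for j
    using assms(1)[rule_format, of "map (\<lambda>i. x i ! j) [0..<N]"] by (simp add: comp_def)
  moreover have "map (\<lambda>i. map Not (x i) ! j) [0..<N] = map (\<lambda>i. \<not> x i ! j) [0..<N]" if "j < k" for j
    using assms(2) that by simp
  ultimately show ?thesis
    unfolding coordwise_def by (intro nth_equalityI) (simp_all del: map_eq_conv)
qed

lemma weak_poly_mono:
  assumes "weak_poly (k, P, Q) N f" "P' \<subseteq> P" "Q \<subseteq> Q'"
  shows "weak_poly (k, P', Q') N f"
  using assms unfolding weak_poly_iff_coordwise by blast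

lemma weak_poly_pad:
  assumes "f (replicate N False) = False" "f (replicate N True) = True"
    and "weak_poly (n + c1 + c0, P, Q) N f"
  shows "weak_poly (n, {u. length u = n \<and> u @ replicate c1 True @ replicate c0 False \<in> P},
                      {u. u @ replicate c1 True @ replicate c0 False \<in> Q}) N f"
  unfolding weak_poly_iff_coordwise
proof (intro allI impI)
  let ?pad = "replicate c1 True @ replicate c0 False"
  fix x assume x: "\<forall>i<N. x i \<in> {u. length u = n \<and> u @ ?pad \<in> P}"
  then have "coordwise f N (\<lambda>i. x i @ ?pad) (n + c1 + c0) \<in> Q"
    using assms(3) unfolding weak_poly_iff_coordwise by auto
  moreover have "coordwise f N (\<lambda>i. x i @ ?pad) (n + c1 + c0) = coordwise f N x n @ ?pad"
    using x assms(1,2) by (simp add: coordwise_append coordwise_replicate add.assoc)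
  ultimately show "coordwise f N x n \<in> {u. u @ ?pad \<in> Q}" by simp
qed

lemma weak_poly_map_Not:
  assumes "\<forall>c. length c = N \<longrightarrow> f (map Not c) = (\<not> f c)" "weak_poly (k, P, Q) N f"
  shows "weak_poly (k, {u. length u = k \<and> map Not u \<in> P}, {u. map Not u \<in> Q}) N f"
  unfolding weak_poly_iff_coordwise
proof (intro allI impI)
  fix x assume x: "\<forall>i<N. x i \<in> {u. length u = k \<and> map Not u \<in> P}"
  then have "coordwise f N (\<lambda>i. map Not (x i)) k \<in> Q"
    using assms(2) unfolding weak_poly_iff_coordwise by auto
  then show "coordwise f N x k \<in> {u. map Not u \<in> Q}"
    using x assms(1) by (simp add: coordwise_map_Not)
qed

definition poly_preserves :: "promise_rel set \<Rightarrow> promise_rel \<Rightarrow> bool" where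
  "poly_preserves \<Gamma> R \<longleftrightarrow> (\<forall>N f. in_poly \<Gamma> N f \<longrightarrow> weak_poly R N f)"

lemma poly_preserves_member: "R \<in> \<Gamma> \<Longrightarrow> poly_preserves \<Gamma> R"
  unfolding poly_preserves_def in_poly_def by blast

lemma poly_preserves_mono:
  "poly_preserves \<Gamma> (k, P, Q) \<Longrightarrow> P' \<subseteq> P \<Longrightarrow> Q \<subseteq> Q' \<Longrightarrow> poly_preserves \<Gamma> (k, P', Q')"
  unfolding poly_preserves_def using weak_poly_mono by blast

lemma poly_preserves_pad_Ham:
  assumes "idempotent_fam \<Gamma>"
    and "poly_preserves \<Gamma> (n + c1 + c0, Ham (n + c1 + c0) A, Ham (n + c1 + c0) B)"
  shows "poly_preserves \<Gamma> (n, Ham n {h. h + c1 \<in> A}, Ham n {h. h + c1 \<in> B})"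
  unfolding poly_preserves_def
proof (intro allI impI)
  let ?pad = "replicate c1 True @ replicate c0 False"
  fix N f assume "in_poly \<Gamma> N f"
  then have "weak_poly (n, {u. length u = n \<and> u @ ?pad \<in> Ham (n + c1 + c0) A},
                           {u. u @ ?pad \<in> Ham (n + c1 + c0) B}) N f"
    using assms unfolding idempotent_fam_def poly_preserves_def by (blast intro: weak_poly_pad)
  then show "weak_poly (n, Ham n {h. h + c1 \<in> A}, Ham n {h. h + c1 \<in> B}) N f"
    by (simp add: append_padding_in_Ham_iff) (simp add: Ham_def)
qed

lemma poly_preserves_reflect_Ham:
  assumes "folded_fam \<Gamma>" "poly_preserves \<Gamma> (k, Ham k A, Ham k B)"
  shows "poly_preserves \<Gamma> (k, Ham k {h. k - h \<in> A}, Ham k {h. k - h \<in> B})"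
  unfolding poly_preserves_def
proof (intro allI impI)
  fix N f assume "in_poly \<Gamma> N f"
  then have "weak_poly (k, {u. length u = k \<and> map Not u \<in> Ham k A}, {u. map Not u \<in> Ham k B}) N f"
    using assms unfolding folded_fam_def poly_preserves_def by (blast intro: weak_poly_map_Not)
  then show "weak_poly (k, Ham k {h. k - h \<in> A}, Ham k {h. k - h \<in> B}) N f"
    by (simp add: map_Not_in_Ham_iff) (simp add: Ham_def)
qed

definition half_weight_rel :: "nat \<Rightarrow> promise_rel" where
  "half_weight_rel k = (k, Ham k {(k + 1) div 2}, Ham k {0..<k})"

definition one_or_all_rel :: "nat \<Rightarrow> nat \<Rightarrow> promise_rel" where
  "one_or_all_rel k b = (k, Ham k {1, k}, Ham k ({0..k} - {b}))"

lemma poly_preserves_half_weight_rel: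
  assumes "idempotent_fam \<Gamma>" "poly_preserves \<Gamma> (k, Ham k A, Ham k B)"
    and "a \<in> A" "w \<notin> B" "a < w" "w < 2 * a" "w \<le> k"
  shows "\<exists>n. odd n \<and> 3 \<le> n \<and> poly_preserves \<Gamma> (half_weight_rel n)"
proof -
  define n where "n = 2 * w + 1 - 2 * a"
  define c1 where "c1 = 2 * a - 1 - w"
  have half: "(n + 1) div 2 + c1 = a"
    using assms(5,6) unfolding n_def c1_def by presburger
  have full: "n + c1 = w"
    using assms(5,6) unfolding n_def c1_def by linarith
  then have "k = n + c1 + (k - w)"
    using assms(7) by linarith
  then have "poly_preserves \<Gamma> (n, Ham n {h. h + c1 \<in> A}, Ham n {h. h + c1 \<in> B})"
    using poly_preserves_pad_Ham[OF assms(1), of n c1 "k - w"] assms(2) by simp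
  moreover have "Ham n {(n + 1) div 2} \<subseteq> Ham n {h. h + c1 \<in> A}"
    using assms(3) half by (intro Ham_mono) simp
  moreover have "Ham n {h. h + c1 \<in> B} \<subseteq> Ham n {0..<n}"
    using assms(4) full by (intro Ham_mono) (auto simp: le_less)
  ultimately have "poly_preserves \<Gamma> (half_weight_rel n)"
    unfolding half_weight_rel_def by (rule poly_preserves_mono)
  moreover have "odd n" "3 \<le> n"
    using assms(5) unfolding n_def by presburger+
  ultimately show ?thesis by blast
qed

lemma poly_preserves_one_or_all_rel:
  assumes "idempotent_fam \<Gamma>" "poly_preserves \<Gamma> (k, Ham k A, Ham k B)"
    and "a \<in> A" "c \<in> A" "w \<notin> B" "1 \<le> a" "a < w" "w < c" "c \<le> k"
  shows "\<exists>n b. 3 \<le> n \<and> b \<in> {2..n - 1} \<and> poly_preserves \<Gamma> (one_or_all_rel n b)"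
proof -
  define n where "n = c + 1 - a"
  define b where "b = w + 1 - a"
  have "k = n + (a - 1) + (k - c)"
    using assms(6-9) unfolding n_def by linarith
  then have "poly_preserves \<Gamma> (n, Ham n {h. h + (a - 1) \<in> A}, Ham n {h. h + (a - 1) \<in> B})"
    using poly_preserves_pad_Ham[OF assms(1), of n "a - 1" "k - c"] assms(2) by simp
  moreover have "Ham n {1, n} \<subseteq> Ham n {h. h + (a - 1) \<in> A}"
    using assms(3,4,6-8) by (intro Ham_mono) (auto simp: n_def)
  moreover have "Ham n {h. h + (a - 1) \<in> B} \<subseteq> Ham n ({0..n} - {b})"
    using assms(5-7) by (intro Ham_mono) (auto simp: b_def)
  ultimately have "poly_preserves \<Gamma> (one_or_all_rel n b)"
    unfolding one_or_all_rel_def by (rule poly_preserves_mono)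
  moreover have "3 \<le> n" "b \<in> {2..n - 1}"
    using assms(7,8) unfolding n_def b_def by auto
  ultimately show ?thesis by blast
qed

lemma Maj_map_Not: "odd L \<Longrightarrow> length c = L \<Longrightarrow> Maj L (map Not c) = (\<not> Maj L c)"
  using hweight_le_length[of c] unfolding Maj_def hweight_map_Not by presburger

lemma hweight_coordwise_Maj_bound:
  assumes "odd L" "\<forall>i<L. length (x i) = k"
  shows "(L + 1) * hweight (coordwise (Maj L) L x k) \<le> 2 * (\<Sum>i<L. hweight (x i))"
proof -
  define col where "col j = map (\<lambda>i. x i ! j) [0..<L]" for j
  have "(L + 1) * hweight (coordwise (Maj L) L x k) = (\<Sum>j<k. (L + 1) * of_bool (Maj L (col j)))"
    by (simp add: hweight_eq_sum coordwise_def col_def sum_distrib_left del: sum_of_bool_eq sum_mult_of_bool_eq)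
  also have "\<dots> \<le> (\<Sum>j<k. 2 * hweight (col j))"
    using assms(1) by (intro sum_mono) (auto simp: Maj_def elim!: oddE)
  also have "\<dots> = 2 * (\<Sum>j<k. \<Sum>i<L. of_bool (x i ! j))"
    by (simp add: hweight_eq_sum col_def sum_distrib_left)
  also have "\<dots> = 2 * (\<Sum>i<L. hweight (x i))"
    using assms(2) by (simp add: hweight_eq_sum sum.swap[of _ "{..<k}"] del: sum_of_bool_eq)
  finally show ?thesis .
qed

lemma hweight_coordwise_Maj_eq_0:
  assumes "odd L" "\<forall>i<L. length (x i) = k"
    and "\<forall>i<L. 2 * hweight (x i) \<le> hweight (coordwise (Maj L) L x k)"
  shows "hweight (coordwise (Maj L) L x k) = 0"
proof -
  let ?w = "hweight (coordwise (Maj L) L x k)"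
  have "(L + 1) * ?w \<le> 2 * (\<Sum>i<L. hweight (x i))"
    using assms(1,2) by (rule hweight_coordwise_Maj_bound)
  also have "\<dots> \<le> L * ?w"
    using assms(3) sum_mono[of "{..<L}" "\<lambda>i. 2 * hweight (x i)" "\<lambda>i. ?w"] by (simp add: sum_distrib_left)
  finally show ?thesis by simp
qed

lemma hweight_coordwise_Maj_eq_length:
  assumes "odd L" "\<forall>i<L. length (x i) = k"
    and "\<forall>i<L. k + hweight (coordwise (Maj L) L x k) \<le> 2 * hweight (x i)"
  shows "hweight (coordwise (Maj L) L x k) = k"
proof -
  let ?w = "hweight (coordwise (Maj L) L x k)"
  have "coordwise (Maj L) L (\<lambda>i. map Not (x i)) k = map Not (coordwise (Maj L) L x k)"
    using assms(1,2) Maj_map_Not by (simp add: coordwise_map_Not)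
  then have "hweight (coordwise (Maj L) L (\<lambda>i. map Not (x i)) k) = k - ?w"
    by (simp add: hweight_map_Not)
  moreover have "\<forall>i<L. length (map Not (x i)) = k \<and> 2 * hweight (map Not (x i)) \<le> k - ?w"
    using assms(2,3) by (auto simp: hweight_map_Not)
  ultimately have "k - ?w = 0"
    using hweight_coordwise_Maj_eq_0[OF assms(1), of "\<lambda>i. map Not (x i)" k] by simp
  then show ?thesis
    using hweight_le_length[of "coordwise (Maj L) L x k"] by simp
qed

lemma hweight_coordwise_extreme_rows:
  assumes "\<forall>i<N. length (x i) = k \<and> (hweight (x i) = 0 \<or> hweight (x i) = k)"
  shows "hweight (coordwise f N x k) \<in> {0, k}"
proof -
  define b where "b i \<longleftrightarrow> hweight (x i) = k" for i
  have "x i = replicate k (b i)" if "i < N" for i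
    using assms that hweight_eq_0_iff hweight_eq_length_iff unfolding b_def by (metis (full_types))
  then have "coordwise f N x k = map (\<lambda>j. f (map b [0..<N])) [0..<k]"
    unfolding coordwise_def by (intro map_cong refl arg_cong[where f = f]) auto
  then show ?thesis
    by (cases "f (map b [0..<N])") (simp_all add: map_replicate_const)
qed

lemma Maj_counterexample_weight_cases:
  fixes x :: "nat \<Rightarrow> bool list"
  assumes L: "odd L" "0 < L" and len: "\<forall>i<L. length (x i) = k"
    and w: "w = hweight (coordwise (Maj L) L x k)" and ne: "\<forall>i<L. hweight (x i) \<noteq> w"
  obtains (low) i where "i < L" "hweight (x i) < w" "w < 2 * hweight (x i)"
    | (high) i where "i < L" "w < hweight (x i)" "2 * hweight (x i) < k + w"
    | (gap_low) i i' where "i < L" "i' < L" "1 \<le> hweight (x i)" "hweight (x i) < w" "w < hweight (x i')"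
    | (gap_high) i i' where "i < L" "i' < L" "hweight (x i) < w" "w < hweight (x i')" "hweight (x i') < k"
proof -
  have le_k: "hweight (x i) \<le> k" if "i < L" for i
    using hweight_le_length len that by metis
  consider (all_low) "\<forall>i<L. hweight (x i) < w" | (all_high) "\<forall>i<L. w < hweight (x i)"
    | (mixed) i i' where "i < L" "i' < L" "hweight (x i) < w" "w < hweight (x i')"
    using ne by (metis linorder_neqE_nat)
  then show ?thesis
  proof cases
    case all_low
    show ?thesis
    proof (cases "\<exists>i<L. w < 2 * hweight (x i)")
      case True
      then show ?thesis using all_low low by blast
    next
      case False
      then have "\<forall>i<L. 2 * hweight (x i) \<le> w"
        using not_less by blast
      then have "w = 0"
        using hweight_coordwise_Maj_eq_0[OF L(1) len] w by simp
      then show ?thesis using all_low L(2) by blast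
    qed
  next
    case all_high
    show ?thesis
    proof (cases "\<exists>i<L. 2 * hweight (x i) < k + w")
      case True
      then show ?thesis using all_high high by blast
    next
      case False
      then have "\<forall>i<L. k + w \<le> 2 * hweight (x i)"
        using not_less by blast
      then have "w = k"
        using hweight_coordwise_Maj_eq_length[OF L(1) len] w by simp
      then show ?thesis using all_high le_k L(2) by (metis not_le)
    qed
  next
    case (mixed i i')
    show ?thesis
    proof (cases "\<exists>j<L. \<exists>j'<L. hweight (x j) < w \<and> w < hweight (x j') \<and>
                    (1 \<le> hweight (x j) \<or> hweight (x j') < k)")
      case True
      then show ?thesis using gap_low gap_high by blast
    next
      case no_gap: False
      have "hweight (x j) = 0 \<or> hweight (x j) = k" if "j < L" for j
        using no_gap mixed le_k ne that by (metis linorder_neqE_nat less_one not_less le_antisym)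
      then have "w \<in> {0, k}"
        using len unfolding w by (intro hweight_coordwise_extreme_rows) auto
      then show ?thesis using mixed le_k[of i'] by auto
    qed
  qed
qed

lemma symmetric_Maj_counterexample:
  assumes "\<forall>R\<in>\<Gamma>. wf_promise_rel R" "symmetric_fam \<Gamma>" "0 < L" "\<not> in_poly \<Gamma> L (Maj L)"
  obtains k A B x where "poly_preserves \<Gamma> (k, Ham k A, Ham k B)" "A \<subseteq> B"
    "\<forall>i<L. length (x i) = k \<and> hweight (x i) \<in> A" "hweight (coordwise (Maj L) L x k) \<notin> B"
proof -
  obtain k P Q where R: "(k, P, Q) \<in> \<Gamma>" "\<not> weak_poly (k, P, Q) L (Maj L)"
    using assms(3,4) unfolding in_poly_def by auto
  then obtain x where x: "\<forall>i<L. x i \<in> P" "coordwise (Maj L) L x k \<notin> Q"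
    unfolding weak_poly_iff_coordwise by blast
  have PQ: "P \<subseteq> Q" "Q \<subseteq> {u. length u = k}"
    using assms(1) R(1) unfolding wf_promise_rel_def by auto
  moreover have "perm_invariant k P" "perm_invariant k Q"
    using assms(2) R(1) unfolding symmetric_fam_def by auto
  ultimately have P: "P = Ham k (hweight ` P)" and Q: "Q = Ham k (hweight ` Q)"
    by (auto intro!: perm_invariant_eq_Ham)
  show ?thesis
  proof (rule that)
    show "poly_preserves \<Gamma> (k, Ham k (hweight ` P), Ham k (hweight ` Q))"
      using poly_preserves_member[OF R(1)] P Q by simp
    show "hweight (coordwise (Maj L) L x k) \<notin> hweight ` Q"
      using x(2) by (subst (asm) Q) (simp add: Ham_def)
  qed (use x PQ in auto)
qed

lemma Maj_counterexample_poly_preserves_target: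
  assumes "folded_fam \<Gamma>" "idempotent_fam \<Gamma>" and L: "odd L" "0 < L"
    and pres: "poly_preserves \<Gamma> (k, Ham k A, Ham k B)" and "A \<subseteq> B"
    and rows: "\<forall>i<L. length (x i) = k \<and> hweight (x i) \<in> A"
    and out: "hweight (coordwise (Maj L) L x k) \<notin> B"
  shows "(\<exists>n. odd n \<and> 3 \<le> n \<and> poly_preserves \<Gamma> (half_weight_rel n)) \<or>
         (\<exists>n b. 3 \<le> n \<and> b \<in> {2..n - 1} \<and> poly_preserves \<Gamma> (one_or_all_rel n b))"
proof -
  define w where "w = hweight (coordwise (Maj L) L x k)"
  have len: "\<forall>i<L. length (x i) = k" and ne: "\<forall>i<L. hweight (x i) \<noteq> w"
    using rows out \<open>A \<subseteq> B\<close> unfolding w_def by auto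
  have "w \<notin> B" "w \<le> k"
    using out hweight_le_length[of "coordwise (Maj L) L x k"] unfolding w_def by simp_all
  have bounds: "\<forall>i<L. hweight (x i) \<le> k"
    using len hweight_le_length by metis
  have reflected: "poly_preserves \<Gamma> (k, Ham k {h. k - h \<in> A}, Ham k {h. k - h \<in> B})"
    by (rule poly_preserves_reflect_Ham[OF assms(1) pres])
  show ?thesis
  proof (cases rule: Maj_counterexample_weight_cases[OF L len w_def ne,
        case_names low high gap_low gap_high])
    case (low i)
    then show ?thesis
      using poly_preserves_half_weight_rel[OF assms(2) pres, of "hweight (x i)" w]
        rows \<open>w \<notin> B\<close> \<open>w \<le> k\<close> by auto
  next
    case (high i)
    then show ?thesis
      using poly_preserves_half_weight_rel[OF assms(2) reflected, of "k - hweight (x i)" "k - w"]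
        rows bounds \<open>w \<notin> B\<close> \<open>w \<le> k\<close> by auto
  next
    case (gap_low i i')
    then show ?thesis
      using poly_preserves_one_or_all_rel[OF assms(2) pres, of "hweight (x i)" "hweight (x i')" w]
        rows bounds \<open>w \<notin> B\<close> by auto
  next
    case (gap_high i i')
    then show ?thesis
      using poly_preserves_one_or_all_rel[OF assms(2) reflected,
          of "k - hweight (x i')" "k - hweight (x i)" "k - w"]
        rows bounds \<open>w \<notin> B\<close> \<open>w \<le> k\<close> by auto
  qed
qed

theorem lemma4p6:
  fixes \<Gamma> :: "promise_rel set"
  assumes "\<forall>R\<in>\<Gamma>. wf_promise_rel R"
    and "symmetric_fam \<Gamma>" and "folded_fam \<Gamma>" and "idempotent_fam \<Gamma>"
    and "\<exists>L. odd L \<and> L > 0 \<and> \<not> in_poly \<Gamma> L (Maj L)"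
  shows "\<exists>k P Q. (\<forall>L f. in_poly \<Gamma> L f \<longrightarrow> in_poly {(k, P, Q)} L f) \<and>
     ((odd k \<and> k \<ge> 3 \<and> P = Ham k {(k + 1) div 2} \<and> Q = Ham k {0..<k}) \<or>
      (\<exists>b. k \<ge> 3 \<and> b \<in> {2..k - 1} \<and> P = Ham k {1, k} \<and> Q = Ham k ({0..k} - {b})))"
proof -
  obtain L where L: "odd L" "0 < L" "\<not> in_poly \<Gamma> L (Maj L)"
    using assms(5) by blast
  then obtain k A B x where "poly_preserves \<Gamma> (k, Ham k A, Ham k B)" "A \<subseteq> B"
    "\<forall>i<L. length (x i) = k \<and> hweight (x i) \<in> A" "hweight (coordwise (Maj L) L x k) \<notin> B"
    using symmetric_Maj_counterexample[OF assms(1,2) L(2,3)] by blast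
  then have "(\<exists>n. odd n \<and> 3 \<le> n \<and> poly_preserves \<Gamma> (half_weight_rel n)) \<or>
      (\<exists>n b. 3 \<le> n \<and> b \<in> {2..n - 1} \<and> poly_preserves \<Gamma> (one_or_all_rel n b))"
    by (rule Maj_counterexample_poly_preserves_target[OF assms(3,4) L(1,2)])
  then show ?thesis
    unfolding half_weight_rel_def one_or_all_rel_def poly_preserves_def in_poly_def by blast
qed

end
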